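(* Let $\mathbf{W}=\langle W;\to,\neg,{}^{+},{}^{-},1\rangle$ be a quasi-Wajsberg* algebra. Then for any $x,y\in W$: (1) $\neg x\to y=\neg y\to x$ and $x\to\neg y=y\to\neg x$; (2) $\neg(x\to y)=\neg x\to\neg y$; (3) $x\to x=y\to y$; (4) $\neg(x\to x)=x\to x$.
   Context: A quasi-Wajsberg* algebra is an algebra $\langle W;\to,\neg,{}^{+},{}^{-},1\rangle$ of type $\langle2,1,1,1,0\rangle$ such that for all $x,y,z\in W$: (QW*1) $x\to y=\neg y\to\neg x$; (QW*2) $(x\to 1)\to((y\to 1)\to z)=(y\to 1)\to((x\to 1)\to z)$; (QW*3) $(1\to x)\to 1=1$; (QW*4) $(z\to z)\to(x\to y)=x\to y$; (QW*5) $(1\to 1)\to x^{+}=((1\to 1)\to x)^{+}=(x\to 1)\to 1$ and $(1\to 1)\to x^{-}=((1\to 1)\to x)^{-}=(x\to\neg 1)\to\neg 1$; (QW*6) $x\to y=(y^{+}\to x^{-})\to(x^{+}\to y^{-})$; (QW*7) $\neg(x\to y)=y\to x$; (QW*8) $\neg\neg x=x$; (QW*9) $(x\to(\neg x\to y))^{+}=x^{+}\to(\neg x^{+}\to y^{+})$; (QW*10) $x\vee y=y\vee x$; (QW*11) $x\vee(y\vee z)=(x\vee y)\vee z$; (QW*12) $x\to(y\vee z)=(x\to y)\vee(x\to z)$; where $x\vee y:=((x^{+}\to y^{+})^{+}\to(\neg x)^{-})\to((y^{-}\to x^{-})^{-}\to x^{-})$. Conventions: ${}^+,{}^-$ bind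 tighter than $\neg$, which binds tighter than $\to$ (so $\neg x\to y$ means $(\neg x)\to y$). *)

theory Defs
  imports Main
begin

text \<open>Quasi-Wajsberg* algebra (W; imp, neg, pl, mi, one), where pl x is x^+ and
  mi x is x^-. The carrier W is the whole type 'a.\<close>

definition qw_join :: "('a \<Rightarrow> 'a \<Rightarrow> 'a) \<Rightarrow> ('a \<Rightarrow> 'a) \<Rightarrow> ('a \<Rightarrow> 'a) \<Rightarrow> ('a \<Rightarrow> 'a) \<Rightarrow> 'a \<Rightarrow> 'a \<Rightarrow> 'a"
  where "qw_join imp neg pl mi x y =
    imp (imp (pl (imp (pl x) (pl y))) (mi (neg x)))
        (imp (mi (imp (mi y) (mi x))) (mi x))"

definition quasi_wajsberg_star ::
  "('a \<Rightarrow> 'a \<Rightarrow> 'a) \<Rightarrow> ('a \<Rightarrow> 'a) \<Rightarrow> ('a \<Rightarrow> 'a) \<Rightarrow> ('a \<Rightarrow> 'a) \<Rightarrow> 'a \<Rightarrow> bool"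
  where "quasi_wajsberg_star imp neg pl mi one \<longleftrightarrow>
    (\<forall>x y. imp x y = imp (neg y) (neg x)) \<and>
    (\<forall>x y z. imp (imp x one) (imp (imp y one) z) = imp (imp y one) (imp (imp x one) z)) \<and>
    (\<forall>x. imp (imp one x) one = one) \<and>
    (\<forall>x y z. imp (imp z z) (imp x y) = imp x y) \<and>
    (\<forall>x. imp (imp one one) (pl x) = pl (imp (imp one one) x) \<and>
         pl (imp (imp one one) x) = imp (imp x one) one) \<and>
    (\<forall>x. imp (imp one one) (mi x) = mi (imp (imp one one) x) \<and>
         mi (imp (imp one one) x) = imp (imp x (neg one)) (neg one)) \<and>
    (\<forall>x y. imp x y = imp (imp (pl y) (mi x)) (imp (pl x) (mi y))) \<and>
    (\<forall>x y. neg (imp x y) = imp y x) \<and>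
    (\<forall>x. neg (neg x) = x) \<and>
    (\<forall>x y. pl (imp x (imp (neg x) y)) = imp (pl x) (imp (neg (pl x)) (pl y))) \<and>
    (\<forall>x y. qw_join imp neg pl mi x y = qw_join imp neg pl mi y x) \<and>
    (\<forall>x y z. qw_join imp neg pl mi x (qw_join imp neg pl mi y z) =
             qw_join imp neg pl mi (qw_join imp neg pl mi x y) z) \<and>
    (\<forall>x y z. imp x (qw_join imp neg pl mi y z) =
             qw_join imp neg pl mi (imp x y) (imp x z))"

end

theory Submission
  imports Defs
begin

lemma quasi_wajsberg_starD:
  assumes "quasi_wajsberg_star imp neg pl mi one"
  shows "imp x y = imp (neg y) (neg x)"
    and "imp (imp z z) (imp x y) = imp x y"
    and "neg (imp x y) = imp y x"
    and "neg (neg x) = x"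
  using assms unfolding quasi_wajsberg_star_def by simp_all

lemma imp_neg_left_commute:
  assumes contrapos: "\<And>x y. imp x y = imp (neg y) (neg x)"
    and neg_neg: "\<And>x. neg (neg x) = x"
  shows "imp (neg x) y = imp (neg y) x"
  using contrapos[of "neg x" y] by (simp add: neg_neg)

lemma imp_neg_right_commute:
  assumes contrapos: "\<And>x y. imp x y = imp (neg y) (neg x)"
    and neg_neg: "\<And>x. neg (neg x) = x"
  shows "imp x (neg y) = imp y (neg x)"
  using contrapos[of x "neg y"] by (simp add: neg_neg)

lemma neg_imp_eq_imp_neg:
  assumes contrapos: "\<And>x y. imp x y = imp (neg y) (neg x)"
    and neg_imp: "\<And>x y. neg (imp x y) = imp y x"
  shows "neg (imp x y) = imp (neg x) (neg y)"
  using contrapos[of y x] by (simp add: neg_imp)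

lemma imp_self_eq:
  assumes imp_self_left: "\<And>x y z. imp (imp z z) (imp x y) = imp x y"
    and neg_imp: "\<And>x y. neg (imp x y) = imp y x"
  shows "imp x x = imp y y"
proof -
  have "imp x x = imp (imp y y) (imp x x)" by (rule imp_self_left [symmetric])
  also have "\<dots> = neg (imp (imp x x) (imp y y))" by (rule neg_imp [symmetric])
  also have "\<dots> = neg (imp y y)" by (simp only: imp_self_left)
  also have "\<dots> = imp y y" by (rule neg_imp)
  finally show ?thesis .
qed

theorem proposition3p1:
  fixes imp :: "'a \<Rightarrow> 'a \<Rightarrow> 'a" and neg pl mi :: "'a \<Rightarrow> 'a" and one :: 'a
  assumes "quasi_wajsberg_star imp neg pl mi one"
  shows "\<forall>x y.
     (imp (neg x) y = imp (neg y) x \<and> imp x (neg y) = imp y (neg x)) \<and>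
     neg (imp x y) = imp (neg x) (neg y) \<and>
     imp x x = imp y y \<and>
     neg (imp x x) = imp x x"
proof -
  note qw = quasi_wajsberg_starD [OF assms]
  show ?thesis
    using imp_neg_left_commute [where imp = imp and neg = neg, OF qw(1) qw(4)]
      imp_neg_right_commute [where imp = imp and neg = neg, OF qw(1) qw(4)]
      neg_imp_eq_imp_neg [where imp = imp and neg = neg, OF qw(1) qw(3)]
      imp_self_eq [where imp = imp and neg = neg, OF qw(2) qw(3)] qw(3)
    by blast
qed

end
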